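(* For all positive integers $\Delta$ and positive reals $\nu$ there is $c$ such that if $p\ge c(\log n/n)^{1/\Delta}$, the following holds a.a.s. for $\Gamma=G(n,p)$ on vertex set $V$. Let $X$ be any subset of $V$ and $\mathcal{F}$ any family of pairwise disjoint $\Delta$-sets in $V\setminus X$. If $\nu n\le|X|\le|\mathcal{F}|\le n$, then $\mathrm{stars}_\Gamma(X,\mathcal{F})\le 7p^\Delta|X||\mathcal{F}|$.
   Context: $G(n,p)$ is the random graph on $[n]$ with edges present independently with probability $p$; a.a.s. means with probability tending to $1$ as $n\to\infty$ (simultaneously for all such $X,\mathcal{F}$). For a graph $G$, a vertex set $X$ and a family $\mathcal{F}$ of pairwise disjoint $\ell$-sets outside $X$, $\mathrm{stars}_G(X,\mathcal{F})$ is the number of pairs $(x,F)$ with $x\in X$, $F\in\mathcal{F}$ and $F\subseteq N_G(x)$. *)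

theory Defs
  imports "HOL-Probability.Probability"
begin

definition all_edges :: "nat \<Rightarrow> nat set set" where
  "all_edges n = {e. e \<subseteq> {..<n} \<and> card e = 2}"

text \<open>The binomial random graph G(n,p): each potential edge is present independently
  with probability p. A graph is represented by its edge indicator function
  (which is False outside all_edges n).\<close>
definition Gnp :: "nat \<Rightarrow> real \<Rightarrow> (nat set \<Rightarrow> bool) pmf" where
  "Gnp n p = Pi_pmf (all_edges n) False (\<lambda>_. bernoulli_pmf p)"

definition nbhd :: "(nat set \<Rightarrow> bool) \<Rightarrow> nat \<Rightarrow> nat set" where
  "nbhd G x = {y. y \<noteq> x \<and> G {x, y}}"

definition stars :: "(nat set \<Rightarrow> bool) \<Rightarrow> nat set \<Rightarrow> nat set set \<Rightarrow> nat" where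
  "stars G X \<F> = card {(x, F). x \<in> X \<and> F \<in> \<F> \<and> F \<subseteq> nbhd G x}"

definition stars_good :: "nat \<Rightarrow> real \<Rightarrow> nat \<Rightarrow> real \<Rightarrow> (nat set \<Rightarrow> bool) \<Rightarrow> bool" where
  "stars_good n p \<Delta> \<nu> G \<longleftrightarrow>
     (\<forall>X \<F>. X \<subseteq> {..<n} \<longrightarrow>
        (\<forall>F\<in>\<F>. F \<subseteq> {..<n} - X \<and> card F = \<Delta>) \<longrightarrow>
        pairwise disjnt \<F> \<longrightarrow>
        \<nu> * real n \<le> real (card X) \<longrightarrow> card X \<le> card \<F> \<longrightarrow> card \<F> \<le> n \<longrightarrow>
        real (stars G X \<F>) \<le> 7 * p ^ \<Delta> * real (card X) * real (card \<F>))"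

end

theory Submission
  imports Defs "HOL-Real_Asymp.Real_Asymp"
begin

text \<open>The expected number of stars is \<open>\<mu> = p ^ \<Delta> * |X| * |\<F>|\<close>. For distinct pairs
  \<open>(x, F)\<close> the events \<open>F \<subseteq> N(x)\<close> concern disjoint sets of edges \<open>{x, y}\<close>, \<open>y \<in> F\<close>, because
  centres lie in \<open>X\<close>, leaves outside \<open>X\<close>, and the leaf sets are disjoint. So any \<open>k\<close> of
  these events occur together with probability \<open>p ^ (\<Delta> * k)\<close>, and a union bound over
  \<open>k\<close>-sets of pairs gives \<open>P(stars \<ge> k) \<le> \<mu> ^ k / k! \<le> exp (-4 \<mu>)\<close> once \<open>k > 7 \<mu>\<close>.
  Above the threshold for \<open>p\<close>, every admissible \<open>(X, \<F>)\<close> has \<open>\<mu> \<ge> (\<Delta> + 2) n ln n\<close>,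
  while there are at most \<open>(4 n ^ \<Delta>) ^ n\<close> of them, so a second union bound leaves a
  failure probability of at most \<open>(4 / n\<^sup>2) ^ n\<close>.\<close>

lemma pow_div_fact_le_exp:
  fixes x :: real
  assumes "0 \<le> x"
  shows "x ^ k / fact k \<le> exp x"
proof -
  have s: "(\<lambda>n. x ^ n /\<^sub>R fact n) sums exp x" by (rule exp_converges)
  have "(\<Sum>n\<in>{k}. x ^ n /\<^sub>R fact n) \<le> suminf (\<lambda>n. x ^ n /\<^sub>R fact n)"
    by (rule sum_le_suminf) (use s assms in \<open>auto simp: sums_iff\<close>)
  with s show ?thesis by (simp add: sums_iff divide_inverse mult.commute)
qed

lemma pow_div_fact_le_exp_minus:
  fixes \<mu> :: real
  assumes "0 \<le> \<mu>" "7 * \<mu> \<le> real k"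
  shows "\<mu> ^ k / fact k \<le> exp (- 4 * \<mu>)"
proof -
  \<comment> \<open>Apply the previous bound at \<open>e * \<mu>\<close>; then \<open>e * \<mu> - k \<le> 3 * \<mu> - 7 * \<mu>\<close>.\<close>
  have "exp 1 ^ k * (\<mu> ^ k / fact k) \<le> exp (exp 1 * \<mu>)"
    using pow_div_fact_le_exp[of "exp 1 * \<mu>" k] assms by (simp add: power_mult_distrib)
  hence "\<mu> ^ k / fact k \<le> exp (exp 1 * \<mu>) / exp 1 ^ k"
    by (simp add: field_simps)
  also have "\<dots> = exp (exp 1 * \<mu> - real k)"
    by (simp add: exp_diff exp_of_nat_mult[symmetric])
  also have "\<dots> \<le> exp (- 4 * \<mu>)"
    using mult_right_mono[OF exp_le assms(1)] assms by simp
  finally show ?thesis .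
qed

lemma prob_card_events_ge_le:
  fixes M :: "'a pmf" and A :: "'i \<Rightarrow> 'a set"
  assumes "finite I"
    and "\<And>T. T \<subseteq> I \<Longrightarrow> card T = k \<Longrightarrow> measure_pmf.prob M (\<Inter>i\<in>T. A i) \<le> q"
  shows "measure_pmf.prob M {\<omega>. k \<le> card {i\<in>I. \<omega> \<in> A i}} \<le> real (card I choose k) * q"
proof -
  let ?\<T> = "{T. T \<subseteq> I \<and> card T = k}"
  have "{\<omega>. k \<le> card {i\<in>I. \<omega> \<in> A i}} \<subseteq> (\<Union>T\<in>?\<T>. \<Inter>i\<in>T. A i)"
  proof
    fix \<omega> assume "\<omega> \<in> {\<omega>. k \<le> card {i\<in>I. \<omega> \<in> A i}}"
    then obtain T where "T \<subseteq> {i\<in>I. \<omega> \<in> A i}" "card T = k"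
      by (auto elim: obtain_subset_with_card_n)
    thus "\<omega> \<in> (\<Union>T\<in>?\<T>. \<Inter>i\<in>T. A i)" by blast
  qed
  hence "measure_pmf.prob M {\<omega>. k \<le> card {i\<in>I. \<omega> \<in> A i}}
      \<le> measure_pmf.prob M (\<Union>T\<in>?\<T>. \<Inter>i\<in>T. A i)"
    by (rule measure_pmf.finite_measure_mono) simp
  also have "\<dots> \<le> (\<Sum>T\<in>?\<T>. measure_pmf.prob M (\<Inter>i\<in>T. A i))"
    by (rule measure_pmf.finite_measure_subadditive_finite) (use assms(1) in auto)
  also have "\<dots> \<le> (\<Sum>T\<in>?\<T>. q)"
    by (rule sum_mono) (use assms(2) in auto)
  also have "\<dots> = real (card I choose k) * q"
    by (simp add: n_subsets assms(1))
  finally show ?thesis .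
qed

lemma binomial_mult_power_le:
  fixes q :: real
  assumes "0 \<le> q"
  shows "real (N choose k) * q ^ k \<le> (real N * q) ^ k / fact k"
proof -
  have "real ((N choose k) * fact k) \<le> real (N ^ k)"
    by (subst of_nat_le_iff) (rule binomial_fact_pow)
  hence "real (N choose k) \<le> real N ^ k / fact k"
    by (simp add: field_simps)
  hence "real (N choose k) * q ^ k \<le> real N ^ k / fact k * q ^ k"
    by (rule mult_right_mono) (use assms in simp)
  thus ?thesis by (simp add: power_mult_distrib)
qed

lemma finite_all_edges: "finite (all_edges n)"
  by (rule finite_subset[of _ "Pow {..<n}"]) (auto simp: all_edges_def)

lemma prob_Gnp_all_present:
  assumes "B \<subseteq> all_edges n" "0 \<le> p" "p \<le> 1"
  shows "measure_pmf.prob (Gnp n p) {G. \<forall>e\<in>B. G e} = p ^ card B"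
proof -
  let ?E = "all_edges n"
  have "{G. \<forall>e\<in>B. G e} = Pi ?E (\<lambda>e. if e \<in> B then {True} else UNIV)"
    using assms(1) by (auto simp: Pi_def)
  hence "measure_pmf.prob (Gnp n p) {G. \<forall>e\<in>B. G e}
      = (\<Prod>e\<in>?E. measure_pmf.prob (bernoulli_pmf p) (if e \<in> B then {True} else UNIV))"
    unfolding Gnp_def by (simp add: measure_Pi_pmf_Pi finite_all_edges)
  also have "\<dots> = (\<Prod>e\<in>?E. if e \<in> B then p else 1)"
    by (intro prod.cong) (use assms in \<open>auto simp: measure_pmf_single\<close>)
  also have "\<dots> = p ^ card B"
    using assms(1) finite_all_edges[of n]
    by (simp add: prod.If_cases Int_absorb1 Int_absorb2 Collect_mem_eq)
  finally show ?thesis .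
qed

lemma card_subsets_card_le:
  assumes "finite D"
  shows "card {S. S \<subseteq> D \<and> card S \<le> m} \<le> (card D + 1) ^ m"
proof -
  let ?L = "{xs. set xs \<subseteq> insert None (Some ` D) \<and> length xs = m}"
  have "{S. S \<subseteq> D \<and> card S \<le> m} \<subseteq> (\<lambda>xs. Some -` set xs) ` ?L"
  proof
    fix S assume S: "S \<in> {S. S \<subseteq> D \<and> card S \<le> m}"
    then obtain xs where xs: "set xs = S" "distinct xs"
      using finite_distinct_list[of S] finite_subset[OF _ assms] by blast
    let ?ys = "map Some xs @ replicate (m - card S) None"
    have "length xs = card S" using xs distinct_card by metis
    hence "?ys \<in> ?L" using S xs by auto
    moreover have "S = Some -` set ?ys" using xs by auto
    ultimately show "S \<in> (\<lambda>xs. Some -` set xs) ` ?L" by (rule image_eqI[rotated])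
  qed
  hence "card {S. S \<subseteq> D \<and> card S \<le> m} \<le> card ((\<lambda>xs. Some -` set xs) ` ?L)"
    by (rule card_mono[rotated]) (simp add: assms finite_lists_length_eq)
  also have "\<dots> \<le> card ?L"
    by (rule card_image_le) (simp add: assms finite_lists_length_eq)
  also have "\<dots> = (card D + 1) ^ m"
    using assms by (simp add: card_lists_length_eq card_image)
  finally show ?thesis .
qed

definition star_edges :: "(nat \<times> nat set) set \<Rightarrow> nat set set" where
  "star_edges T = (\<lambda>((x, F), y). {x, y}) ` Sigma T snd"

context
  fixes n \<Delta> :: nat and X :: "nat set" and \<F> :: "nat set set"
  assumes X_sub: "X \<subseteq> {..<n}"
    and \<F>_sets: "\<forall>F\<in>\<F>. F \<subseteq> {..<n} - X \<and> card F = \<Delta>"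
    and \<F>_disjoint: "pairwise disjnt \<F>"
begin

lemma finite_centres_leaves: "finite (X \<times> \<F>)"
  using X_sub \<F>_sets finite_subset[of \<F> "Pow {..<n}"] finite_subset[of X "{..<n}"] by blast

lemma star_edges_subset_all_edges:
  assumes "T \<subseteq> X \<times> \<F>"
  shows "star_edges T \<subseteq> all_edges n"
proof
  fix e assume "e \<in> star_edges T"
  then obtain x F y where "(x, F) \<in> T" "y \<in> F" "e = {x, y}" by (auto simp: star_edges_def)
  thus "e \<in> all_edges n"
    using assms X_sub \<F>_sets by (force simp: all_edges_def card_insert_if)
qed

lemma card_star_edges:
  assumes "T \<subseteq> X \<times> \<F>"
  shows "card (star_edges T) = \<Delta> * card T"
proof -
  have fin: "finite T" using assms finite_centres_leaves finite_subset by blast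
  have "inj_on (\<lambda>((x, F), y). {x, y}) (Sigma T snd)"
  proof (rule inj_onI, clarsimp)
    fix x F y x' F' y'
    assume a: "(x, F) \<in> T" "y \<in> F" "(x', F') \<in> T" "y' \<in> F'" "{x, y} = {x', y'}"
    have in\<F>: "x \<in> X" "x' \<in> X" "F \<in> \<F>" "F' \<in> \<F>" using a assms by auto
    hence "y \<notin> X" "y' \<notin> X" using a \<F>_sets by auto
    hence "x = x'" "y = y'" using a(5) in\<F> by (auto simp: doubleton_eq_iff)
    moreover have "F = F'"
      using a \<open>y = y'\<close> in\<F> \<F>_disjoint by (auto simp: pairwise_def disjnt_def)
    ultimately show "x = x' \<and> F = F' \<and> y = y'" by simp
  qed
  hence "card (star_edges T) = card (Sigma T snd)"
    unfolding star_edges_def by (rule card_image)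
  also have "\<dots> = (\<Sum>z\<in>T. card (snd z))"
  proof (rule card_SigmaI[OF fin], rule ballI)
    fix z assume "z \<in> T"
    hence "snd z \<in> \<F>" using assms by (force simp: mem_Times_iff)
    hence "snd z \<subseteq> {..<n}" using \<F>_sets by blast
    thus "finite (snd z)" by (rule finite_subset) simp
  qed
  also have "\<dots> = (\<Sum>z\<in>T. \<Delta>)"
    using assms \<F>_sets by (intro sum.cong) auto
  also have "\<dots> = \<Delta> * card T" by simp
  finally show ?thesis .
qed

lemma prob_leaves_adjacent_le:
  assumes "T \<subseteq> X \<times> \<F>" "0 \<le> p" "p \<le> 1"
  shows "measure_pmf.prob (Gnp n p) (\<Inter>z\<in>T. {G. snd z \<subseteq> nbhd G (fst z)}) \<le> (p ^ \<Delta>) ^ card T"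
proof -
  have "(\<Inter>z\<in>T. {G. snd z \<subseteq> nbhd G (fst z)}) \<subseteq> {G. \<forall>e\<in>star_edges T. G e}"
    by (force simp: star_edges_def nbhd_def)
  hence "measure_pmf.prob (Gnp n p) (\<Inter>z\<in>T. {G. snd z \<subseteq> nbhd G (fst z)})
      \<le> measure_pmf.prob (Gnp n p) {G. \<forall>e\<in>star_edges T. G e}"
    by (rule measure_pmf.finite_measure_mono) simp
  also have "\<dots> = (p ^ \<Delta>) ^ card T"
    using prob_Gnp_all_present[OF star_edges_subset_all_edges[OF assms(1)] assms(2,3)]
    by (simp add: card_star_edges[OF assms(1)] power_mult)
  finally show ?thesis .
qed

lemma prob_stars_gt_le:
  assumes "0 \<le> p" "p \<le> 1"
  shows "measure_pmf.prob (Gnp n p)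
           {G. real (stars G X \<F>) > 7 * p ^ \<Delta> * real (card X) * real (card \<F>)}
         \<le> exp (- 4 * (p ^ \<Delta> * real (card X) * real (card \<F>)))"
proof -
  define \<mu> where "\<mu> = p ^ \<Delta> * real (card X) * real (card \<F>)"
  define k where "k = nat \<lfloor>7 * \<mu>\<rfloor> + 1"
  have \<mu>: "0 \<le> \<mu>" using assms by (simp add: \<mu>_def)
  hence k: "7 * \<mu> < real k" unfolding k_def by linarith
  let ?A = "\<lambda>z. {G. snd z \<subseteq> nbhd G (fst z)}"
  have "stars G X \<F> = card {z\<in>X \<times> \<F>. G \<in> ?A z}" for G
    unfolding stars_def by (rule arg_cong[where f = card]) auto
  moreover have "k \<le> s" if "7 * \<mu> < real s" for s
  proof -
    have "\<lfloor>7 * \<mu>\<rfloor> < int s" using that by (simp add: floor_less_iff)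
    hence "nat \<lfloor>7 * \<mu>\<rfloor> < s" using \<mu> by (simp add: nat_less_iff)
    thus ?thesis by (simp add: k_def)
  qed
  ultimately have "{G. real (stars G X \<F>) > 7 * \<mu>} \<subseteq> {G. k \<le> card {z\<in>X \<times> \<F>. G \<in> ?A z}}"
    by auto
  hence "measure_pmf.prob (Gnp n p) {G. real (stars G X \<F>) > 7 * \<mu>}
      \<le> measure_pmf.prob (Gnp n p) {G. k \<le> card {z\<in>X \<times> \<F>. G \<in> ?A z}}"
    by (rule measure_pmf.finite_measure_mono) simp
  also have "\<dots> \<le> real (card (X \<times> \<F>) choose k) * (p ^ \<Delta>) ^ k"
    using prob_leaves_adjacent_le[OF _ assms]
    by (intro prob_card_events_ge_le finite_centres_leaves) auto
  also have "\<dots> \<le> \<mu> ^ k / fact k"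
    using binomial_mult_power_le[of "p ^ \<Delta>" "card (X \<times> \<F>)" k] assms
    by (simp add: \<mu>_def card_cartesian_product mult_ac)
  also have "\<dots> \<le> exp (- 4 * \<mu>)"
    using k \<mu> by (intro pow_div_fact_le_exp_minus) auto
  finally show ?thesis by (simp add: \<mu>_def mult.assoc)
qed

end

definition star_configs :: "nat \<Rightarrow> nat \<Rightarrow> real \<Rightarrow> (nat set \<times> nat set set) set" where
  "star_configs n \<Delta> \<nu> = {(X, \<F>). X \<subseteq> {..<n} \<and> (\<forall>F\<in>\<F>. F \<subseteq> {..<n} - X \<and> card F = \<Delta>) \<and>
     pairwise disjnt \<F> \<and> \<nu> * real n \<le> real (card X) \<and> card X \<le> card \<F> \<and> card \<F> \<le> n}"

lemma stars_good_iff: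
  "stars_good n p \<Delta> \<nu> G \<longleftrightarrow>
     (\<forall>(X, \<F>)\<in>star_configs n \<Delta> \<nu>. real (stars G X \<F>) \<le> 7 * p ^ \<Delta> * real (card X) * real (card \<F>))"
  unfolding stars_good_def star_configs_def by blast

lemma card_k_subsets_lessThan_le: "card {F. F \<subseteq> {..<n} \<and> card F = k} \<le> n ^ k"
  by (cases "k \<le> n") (simp_all add: n_subsets binomial_le_pow binomial_eq_0)

lemma star_configs_subset:
  "star_configs n \<Delta> \<nu> \<subseteq> Pow {..<n} \<times> {\<S>. \<S> \<subseteq> {F. F \<subseteq> {..<n} \<and> card F = \<Delta>} \<and> card \<S> \<le> n}"
  by (auto simp: star_configs_def)

lemma finite_star_configs: "finite (star_configs n \<Delta> \<nu>)"
  by (rule finite_subset[OF star_configs_subset]) simp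

lemma card_star_configs_le:
  assumes "1 \<le> n"
  shows "card (star_configs n \<Delta> \<nu>) \<le> (4 * n ^ \<Delta>) ^ n"
proof -
  let ?D = "{F. F \<subseteq> {..<n} \<and> card F = \<Delta>}"
  have "card (star_configs n \<Delta> \<nu>) \<le> card (Pow {..<n} \<times> {\<S>. \<S> \<subseteq> ?D \<and> card \<S> \<le> n})"
    by (rule card_mono[OF _ star_configs_subset]) simp
  also have "\<dots> \<le> 2 ^ n * (card ?D + 1) ^ n"
    using card_subsets_card_le[of ?D n] by (simp add: card_cartesian_product card_Pow)
  also have "\<dots> \<le> 2 ^ n * (2 * n ^ \<Delta>) ^ n"
  proof -
    have "card ?D + 1 \<le> 2 * n ^ \<Delta>"
      using card_k_subsets_lessThan_le[of n \<Delta>] one_le_power[OF assms, of \<Delta>] by linarith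
    thus ?thesis by (intro mult_left_mono power_mono) auto
  qed
  also have "\<dots> = (4 * n ^ \<Delta>) ^ n"
    by (simp add: power_mult_distrib flip: power_mult_distrib[of "2::nat" 2 n])
  finally show ?thesis .
qed

lemma threshold_power_ge:
  fixes c t q :: real
  assumes "0 < \<Delta>" "1 \<le> c" "0 < t" "c * t powr (1 / real \<Delta>) \<le> q"
  shows "c * t \<le> q ^ \<Delta>"
proof -
  have "c * t \<le> c ^ \<Delta> * t"
    using power_increasing[of 1 \<Delta> c] assms by (intro mult_right_mono) auto
  also have "\<dots> = (c * t powr (1 / real \<Delta>)) ^ \<Delta>"
    using assms by (simp add: power_mult_distrib powr_power)
  also have "\<dots> \<le> q ^ \<Delta>"
    by (rule power_mono) (use assms in auto)
  finally show ?thesis .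
qed

lemma exp_mult_n_ln_n:
  assumes "0 < n"
  shows "exp (real k * (real n * ln (real n))) = (real n ^ k) ^ n"
proof -
  have "exp (real k * (real n * ln (real n))) = exp (real k * ln (real n)) ^ n"
    by (simp add: exp_of_nat_mult[symmetric] mult_ac)
  also have "exp (real k * ln (real n)) = real n ^ k"
    using assms by (simp add: exp_of_nat_mult)
  finally show ?thesis .
qed

lemma prob_stars_gt_config_le:
  assumes \<Delta>: "0 < \<Delta>" and \<nu>: "0 < \<nu>" and n: "2 \<le> n" and q: "0 \<le> q" "q \<le> 1"
    and threshold: "(1 + (real \<Delta> + 2) / \<nu>\<^sup>2) * (ln (real n) / real n) powr (1 / real \<Delta>) \<le> q"
    and config: "(X, \<F>) \<in> star_configs n \<Delta> \<nu>"
  shows "measure_pmf.prob (Gnp n q)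
           {G. real (stars G X \<F>) > 7 * q ^ \<Delta> * real (card X) * real (card \<F>)}
         \<le> inverse (real n ^ (\<Delta> + 2)) ^ n"
proof -
  define c where "c = 1 + (real \<Delta> + 2) / \<nu>\<^sup>2"
  define \<mu> where "\<mu> = q ^ \<Delta> * real (card X) * real (card \<F>)"
  have X: "X \<subseteq> {..<n}" "\<forall>F\<in>\<F>. F \<subseteq> {..<n} - X \<and> card F = \<Delta>" "pairwise disjnt \<F>"
    and size: "\<nu> * real n \<le> real (card X)" "card X \<le> card \<F>"
    using config by (auto simp: star_configs_def)
  have qc: "c * (ln (real n) / real n) \<le> q ^ \<Delta>"
    using threshold \<Delta> \<nu> n by (intro threshold_power_ge) (auto simp: c_def)
  have XF: "(\<nu> * real n)\<^sup>2 \<le> real (card X) * real (card \<F>)"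
    unfolding power2_eq_square using size \<nu> by (intro mult_mono) auto
  have "(real \<Delta> + 2) * (real n * ln (real n)) \<le> c * \<nu>\<^sup>2 * (real n * ln (real n))"
    using \<nu> n by (intro mult_right_mono) (auto simp: c_def field_simps)
  also have "\<dots> = c * (ln (real n) / real n) * (\<nu> * real n)\<^sup>2"
    using n by (simp add: power2_eq_square field_simps)
  also have "\<dots> \<le> \<mu>"
    unfolding \<mu>_def mult.assoc[of "q ^ \<Delta>"] using qc XF q by (intro mult_mono) auto
  finally have exponent: "(real \<Delta> + 2) * (real n * ln (real n)) \<le> \<mu>" .
  have "0 \<le> \<mu>" using q by (simp add: \<mu>_def)
  have "measure_pmf.prob (Gnp n q) {G. real (stars G X \<F>) > 7 * \<mu>} \<le> exp (- 4 * \<mu>)"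
    using prob_stars_gt_le[OF X q] by (simp add: \<mu>_def mult.assoc)
  also have "\<dots> \<le> exp (- ((real \<Delta> + 2) * (real n * ln (real n))))"
    using exponent \<open>0 \<le> \<mu>\<close> by simp
  also have "\<dots> = inverse (real n ^ (\<Delta> + 2)) ^ n"
  proof -
    have "exp ((real \<Delta> + 2) * (real n * ln (real n))) = (real n ^ (\<Delta> + 2)) ^ n"
      using exp_mult_n_ln_n[of n "\<Delta> + 2"] n by (simp add: add.commute)
    thus ?thesis by (simp only: exp_minus power_inverse)
  qed
  finally show ?thesis by (simp add: \<mu>_def mult.assoc)
qed

lemma prob_stars_good_ge:
  assumes "0 < \<Delta>" "0 < \<nu>" and n: "2 \<le> n" and "0 \<le> q" "q \<le> 1"
    and "(1 + (real \<Delta> + 2) / \<nu>\<^sup>2) * (ln (real n) / real n) powr (1 / real \<Delta>) \<le> q"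
  shows "1 - 4 / real n ^ 2 \<le> measure_pmf.prob (Gnp n q) {G. stars_good n q \<Delta> \<nu> G}"
proof -
  let ?C = "star_configs n \<Delta> \<nu>"
  let ?bad = "\<lambda>(X, \<F>). {G. real (stars G X \<F>) > 7 * q ^ \<Delta> * real (card X) * real (card \<F>)}"
  have "{G. \<not> stars_good n q \<Delta> \<nu> G} \<subseteq> (\<Union>z\<in>?C. ?bad z)"
    by (force simp: stars_good_iff)
  hence "measure_pmf.prob (Gnp n q) {G. \<not> stars_good n q \<Delta> \<nu> G}
      \<le> measure_pmf.prob (Gnp n q) (\<Union>z\<in>?C. ?bad z)"
    by (rule measure_pmf.finite_measure_mono) simp
  also have "\<dots> \<le> (\<Sum>z\<in>?C. measure_pmf.prob (Gnp n q) (?bad z))"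
    by (rule measure_pmf.finite_measure_subadditive_finite) (auto simp: finite_star_configs)
  also have "\<dots> \<le> (\<Sum>z\<in>?C. inverse (real n ^ (\<Delta> + 2)) ^ n)"
    using prob_stars_gt_config_le[OF assms] by (intro sum_mono) auto
  also have "\<dots> \<le> (4 * real n ^ \<Delta>) ^ n * inverse (real n ^ (\<Delta> + 2)) ^ n"
  proof -
    have "real (card ?C) \<le> real ((4 * n ^ \<Delta>) ^ n)"
      using card_star_configs_le[of n \<Delta> \<nu>] n by (simp only: of_nat_le_iff)
    thus ?thesis by (simp add: mult_right_mono)
  qed
  also have "\<dots> = (4 / real n ^ 2) ^ n"
  proof -
    have "4 * real n ^ \<Delta> * inverse (real n ^ (\<Delta> + 2)) = 4 / real n ^ 2"
      using n by (simp add: power_add power2_eq_square field_simps)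
    thus ?thesis by (simp only: power_mult_distrib[symmetric])
  qed
  also have "\<dots> \<le> 4 / real n ^ 2"
  proof -
    have "2 ^ 2 \<le> real n ^ 2" using n by (intro power_mono) auto
    thus ?thesis using n power_decreasing[of 1 n "4 / real n ^ 2"] by simp
  qed
  finally have "measure_pmf.prob (Gnp n q) {G. \<not> stars_good n q \<Delta> \<nu> G} \<le> 4 / real n ^ 2" .
  moreover have "measure_pmf.prob (Gnp n q) {G. stars_good n q \<Delta> \<nu> G}
      = 1 - measure_pmf.prob (Gnp n q) {G. \<not> stars_good n q \<Delta> \<nu> G}"
    using measure_pmf.prob_compl[of "{G. \<not> stars_good n q \<Delta> \<nu> G}" "Gnp n q"]
    by (simp add: Compl_eq_Diff_UNIV[symmetric] Collect_neg_eq[symmetric])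
  ultimately show ?thesis by simp
qed

theorem lemma6p2:
  fixes \<Delta> :: nat and \<nu> :: real
  assumes "\<Delta> > 0" and "\<nu> > 0"
  shows "\<exists>c::real. \<forall>p :: nat \<Rightarrow> real.
           (\<forall>n. 0 \<le> p n \<and> p n \<le> 1) \<longrightarrow>
           (\<forall>\<^sub>F n in sequentially. p n \<ge> c * (ln (real n) / real n) powr (1 / real \<Delta>)) \<longrightarrow>
           ((\<lambda>n. measure_pmf.prob (Gnp n (p n)) {G. stars_good n (p n) \<Delta> \<nu> G})
              \<longlonglongrightarrow> 1)"
proof (intro exI[of _ "1 + (real \<Delta> + 2) / \<nu>\<^sup>2"] allI impI)
  fix p :: "nat \<Rightarrow> real"
  assume p: "\<forall>n. 0 \<le> p n \<and> p n \<le> 1"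
    and threshold: "\<forall>\<^sub>F n in sequentially.
      p n \<ge> (1 + (real \<Delta> + 2) / \<nu>\<^sup>2) * (ln (real n) / real n) powr (1 / real \<Delta>)"
  let ?good = "\<lambda>n. measure_pmf.prob (Gnp n (p n)) {G. stars_good n (p n) \<Delta> \<nu> G}"
  have "\<forall>\<^sub>F n in sequentially. 1 - 4 / real n ^ 2 \<le> ?good n"
    using threshold eventually_ge_at_top[of 2]
    by eventually_elim (use assms p in \<open>simp add: prob_stars_good_ge\<close>)
  moreover have "\<forall>\<^sub>F n in sequentially. ?good n \<le> 1"
    by simp
  moreover have "(\<lambda>n. 1 - 4 / real n ^ 2) \<longlonglongrightarrow> 1"
    by real_asymp
  ultimately show "?good \<longlonglongrightarrow> 1"
    by (rule tendsto_sandwich[OF _ _ _ tendsto_const])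
qed

end
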